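(* Let $\mathbb{F}_q$ be a finite field of order $q$ and $m\ge2$. Then the optimal winning probabilities of the multiplication games over $\mathbb{F}_q$ satisfy $$\omega_m\le\frac{1+\sqrt{1+4q(q-1)\,\omega_{m-1}}}{2q}.$$
   Context: For $r\ge1$, the $r$-player "Number on the Forehead" multiplication game over $\mathbb{F}_q$: inputs $X_1,\dots,X_r$ are independent and uniform on $\mathbb{F}_q$; player $k$ sees all inputs except $X_k$ (denoted $X_{[r]\setminus\{k\}}$) and outputs $Y_k=f_k(X_{[r]\setminus\{k\}})$ for a function $f_k:\mathbb{F}_q^{r-1}\to\mathbb{F}_q$ (for $r=1$ this is a constant). The game is won iff $\prod_{k=1}^rX_k=\sum_{k=1}^rY_k$. Define $\omega_r(f_1,\dots,f_r)=\Pr[\prod_{k=1}^rX_k=\sum_{k=1}^rf_k(X_{[r]\setminus\{k\}})]$ and $\omega_r=\max_{f_1,\dots,f_r}\omega_r(f_1,\dots,f_r)$, the maximum over all functions $\mathbb{F}_q^{r-1}\to\mathbb{F}_q$. *)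

theory Defs
  imports Complex_Main "HOL-Library.FuncSet"
begin

text \<open>Multiplication NOF game over a finite field 'a with r players indexed 0..r-1.
  An input is x in PiE {..<r} UNIV; player k gets the restriction of x to
  {..<r} - {k} (all inputs except x k) and outputs f k of it.\<close>

definition nof_win_prob :: "nat \<Rightarrow> (nat \<Rightarrow> (nat \<Rightarrow> 'a::{finite,field}) \<Rightarrow> 'a) \<Rightarrow> real" where
  "nof_win_prob r f =
     real (card {x \<in> PiE {..<r} (\<lambda>_. (UNIV::'a set)).
                  (\<Prod>k<r. x k) = (\<Sum>k<r. f k (restrict x ({..<r} - {k})))})
     / real (card (UNIV::'a set)) ^ r"

definition nof_omega :: "'a::{finite,field} itself \<Rightarrow> nat \<Rightarrow> real" where
  "nof_omega (t::'a itself) r =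
     Max (range (\<lambda>f :: nat \<Rightarrow> (nat \<Rightarrow> 'a) \<Rightarrow> 'a. nof_win_prob r f))"

end

theory Submission imports Defs "HOL-Library.Cardinality" "HOL-Analysis.Convex" begin

text \<open>Let \<open>f\<close> be optimal for \<open>m = n + 1\<close> players. For each row \<open>y\<close> of the first \<open>n\<close>
  inputs, count the values \<open>a\<close> of the last input for which \<open>(y, a)\<close> is won; these counts add up
  to \<open>q\<^sup>m \<omega>\<^sub>m\<close>. If \<open>(y, a)\<close> and \<open>(y, b)\<close> are both won with \<open>a \<noteq> b\<close>, subtracting the two
  winning equations cancels the last player's answer (it does not see the last input), and
  dividing by \<open>a - b\<close> shows that \<open>y\<close> is won by an \<open>n\<close>-player strategy depending only on
  \<open>f, a, b\<close>. So each pair \<open>a \<noteq> b\<close> is shared by at most \<open>q\<^sup>n \<omega>\<^sub>n\<close> rows, and Cauchy-Schwarz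
  over the rows gives \<open>q\<^sup>2 \<omega>\<^sub>m\<^sup>2 \<le> q \<omega>\<^sub>m + q (q - 1) \<omega>\<^sub>n\<close>, whose larger root is the bound.\<close>

lemma incidences_squared_le:
  fixes R :: "'b \<Rightarrow> 'a \<Rightarrow> bool" and M :: real
  assumes "finite Y" "finite A"
    and common: "\<And>a b. a \<in> A \<Longrightarrow> b \<in> A \<Longrightarrow> a \<noteq> b \<Longrightarrow> real (card {y \<in> Y. R y a \<and> R y b}) \<le> M"
  defines "T \<equiv> \<Sum>y\<in>Y. real (card {a \<in> A. R y a})"
  shows "T\<^sup>2 \<le> real (card Y) * (T + real (card A) * (real (card A) - 1) * M)"
proof -
  define I :: "'b \<Rightarrow> 'a \<Rightarrow> real" where "I y a = of_bool (R y a)" for y a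
  have deg: "real (card {a \<in> A. R y a}) = (\<Sum>a\<in>A. I y a)" for y
    using \<open>finite A\<close> by (simp add: I_def sum.If_cases Int_def)
  have deg_squared: "(\<Sum>a\<in>A. I y a)\<^sup>2 = (\<Sum>a\<in>A. I y a) + (\<Sum>a\<in>A. \<Sum>b\<in>A - {a}. I y a * I y b)" for y
  proof -
    have "(\<Sum>a\<in>A. I y a)\<^sup>2 = (\<Sum>a\<in>A. \<Sum>b\<in>A. I y a * I y b)"
      by (simp add: power2_eq_square sum_product)
    also have "\<dots> = (\<Sum>a\<in>A. I y a + (\<Sum>b\<in>A - {a}. I y a * I y b))"
      using \<open>finite A\<close> by (intro sum.cong refl, subst sum.remove[of A]) (auto simp: I_def)
    finally show ?thesis by (simp add: sum.distrib)
  qed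
  have second_moment: "(\<Sum>y\<in>Y. (\<Sum>a\<in>A. I y a)\<^sup>2) = T + (\<Sum>a\<in>A. \<Sum>b\<in>A - {a}. \<Sum>y\<in>Y. I y a * I y b)"
    unfolding deg_squared sum.distrib T_def deg
    by (subst (2) sum.swap, subst sum.swap) (simp add: sum.swap[of _ Y])
  have "(\<Sum>a\<in>A. \<Sum>b\<in>A - {a}. \<Sum>y\<in>Y. I y a * I y b) \<le> (\<Sum>a\<in>A. \<Sum>b\<in>A - {a}. M)"
  proof (intro sum_mono)
    fix a b assume "a \<in> A" "b \<in> A - {a}"
    moreover have "(\<Sum>y\<in>Y. I y a * I y b) = real (card {y \<in> Y. R y a \<and> R y b})"
      using \<open>finite Y\<close> by (simp add: I_def sum.If_cases Int_def)
    ultimately show "(\<Sum>y\<in>Y. I y a * I y b) \<le> M" using common by auto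
  qed
  also have "\<dots> = (\<Sum>a\<in>A. (real (card A) - 1) * M)"
  proof (intro sum.cong refl)
    fix a assume "a \<in> A"
    then have "card A = Suc (card (A - {a}))" by (rule card.remove[OF \<open>finite A\<close>])
    then show "(\<Sum>b\<in>A - {a}. M) = (real (card A) - 1) * M" by simp
  qed
  finally have pairs: "(\<Sum>a\<in>A. \<Sum>b\<in>A - {a}. \<Sum>y\<in>Y. I y a * I y b) \<le> real (card A) * (real (card A) - 1) * M"
    by simp
  have "T\<^sup>2 \<le> (\<Sum>y\<in>Y. (\<Sum>a\<in>A. I y a)\<^sup>2) * real (card Y)"
    unfolding T_def deg by (rule sum_squared_le_sum_of_squares)
  also have "\<dots> \<le> (T + real (card A) * (real (card A) - 1) * M) * real (card Y)"
    unfolding second_moment using pairs by (intro mult_right_mono) simp_all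
  finally show ?thesis
    by (simp only: mult.commute)
qed

lemma le_quadratic_root:
  fixes p q c :: real
  assumes "q > 0" and "q\<^sup>2 * p\<^sup>2 \<le> q * p + c"
  shows "p \<le> (1 + sqrt (1 + 4 * c)) / (2 * q)"
proof -
  have "(2 * q * p - 1)\<^sup>2 \<le> 1 + 4 * c"
    using assms(2) by (simp add: power2_eq_square algebra_simps)
  then have "2 * q * p - 1 \<le> sqrt (1 + 4 * c)"
    by (rule real_le_rsqrt)
  then show ?thesis
    using assms(1) by (simp add: pos_le_divide_eq algebra_simps)
qed

definition nof_wins :: "nat \<Rightarrow> (nat \<Rightarrow> (nat \<Rightarrow> 'a::{finite,field}) \<Rightarrow> 'a) \<Rightarrow> (nat \<Rightarrow> 'a) \<Rightarrow> bool" where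
  "nof_wins r f x \<longleftrightarrow> (\<Prod>k<r. x k) = (\<Sum>k<r. f k (restrict x ({..<r} - {k})))"

lemma nof_win_prob_eq_card:
  "nof_win_prob r f = real (card {x \<in> PiE {..<r} (\<lambda>_. UNIV). nof_wins r f x}) / real CARD('a) ^ r"
  for f :: "nat \<Rightarrow> (nat \<Rightarrow> 'a::{finite,field}) \<Rightarrow> 'a"
  unfolding nof_win_prob_def nof_wins_def ..

lemma finite_range_nof_win_prob:
  "finite (range (\<lambda>f :: nat \<Rightarrow> (nat \<Rightarrow> 'a::{finite,field}) \<Rightarrow> 'a. nof_win_prob r f))"
proof (rule finite_subset)
  let ?X = "PiE {..<r} (\<lambda>_. UNIV :: 'a set)"
  show "range (\<lambda>f :: nat \<Rightarrow> (nat \<Rightarrow> 'a) \<Rightarrow> 'a. nof_win_prob r f)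
        \<subseteq> (\<lambda>c. real c / real CARD('a) ^ r) ` {..card ?X}"
  proof clarify
    fix f :: "nat \<Rightarrow> (nat \<Rightarrow> 'a) \<Rightarrow> 'a"
    have "card {x \<in> ?X. nof_wins r f x} \<le> card ?X"
      by (rule card_mono) (auto simp: finite_PiE)
    then show "nof_win_prob r f \<in> (\<lambda>c. real c / real CARD('a) ^ r) ` {..card ?X}"
      unfolding nof_win_prob_eq_card by auto
  qed
qed simp

lemma nof_win_prob_le_omega:
  "nof_win_prob r f \<le> nof_omega TYPE('a) r"
  for f :: "nat \<Rightarrow> (nat \<Rightarrow> 'a::{finite,field}) \<Rightarrow> 'a"
  unfolding nof_omega_def by (rule Max_ge[OF finite_range_nof_win_prob]) simp

lemma nof_omega_attained:
  obtains f :: "nat \<Rightarrow> (nat \<Rightarrow> 'a::{finite,field}) \<Rightarrow> 'a"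
  where "nof_omega TYPE('a) r = nof_win_prob r f"
proof -
  have "nof_omega TYPE('a) r \<in> range (\<lambda>f :: nat \<Rightarrow> (nat \<Rightarrow> 'a) \<Rightarrow> 'a. nof_win_prob r f)"
    unfolding nof_omega_def by (rule Max_in[OF finite_range_nof_win_prob]) simp
  with that show ?thesis by blast
qed

lemma sum_PiE_lessThan_Suc:
  fixes h :: "(nat \<Rightarrow> 'a::finite) \<Rightarrow> 'b::comm_monoid_add"
  shows "(\<Sum>x\<in>PiE {..<Suc n} (\<lambda>_. UNIV). h x) = (\<Sum>y\<in>PiE {..<n} (\<lambda>_. UNIV). \<Sum>a\<in>UNIV. h (y(n := a)))"
proof -
  have PiE_Suc: "PiE {..<Suc n} (\<lambda>_. UNIV :: 'a set) = (\<lambda>(a, y). y(n := a)) ` (UNIV \<times> PiE {..<n} (\<lambda>_. UNIV))"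
    using PiE_insert_eq[of n "{..<n}" "\<lambda>_. UNIV :: 'a set"] by (simp add: lessThan_Suc)
  have "inj_on (\<lambda>(a, y). y(n := a)) (UNIV \<times> PiE {..<n} (\<lambda>_. UNIV :: 'a set))"
    using inj_combinator[of n "{..<n}" "\<lambda>_. UNIV :: 'a set"] by simp
  then have "(\<Sum>x\<in>PiE {..<Suc n} (\<lambda>_. UNIV). h x) = (\<Sum>a\<in>UNIV. \<Sum>y\<in>PiE {..<n} (\<lambda>_. UNIV). h (y(n := a)))"
    unfolding PiE_Suc by (simp add: sum.reindex sum.cartesian_product case_prod_unfold)
  then show ?thesis
    by (simp only: sum.swap[of _ UNIV])
qed

lemma card_PiE_lessThan_Suc:
  fixes P :: "(nat \<Rightarrow> 'a::finite) \<Rightarrow> bool"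
  shows "card {x \<in> PiE {..<Suc n} (\<lambda>_. UNIV). P x} = (\<Sum>y\<in>PiE {..<n} (\<lambda>_. UNIV). card {a. P (y(n := a))})"
  using sum_PiE_lessThan_Suc[of "\<lambda>x. if P x then 1 else 0 :: nat" n]
  by (simp add: sum.If_cases Int_def finite_PiE)

definition difference_strategy ::
  "nat \<Rightarrow> (nat \<Rightarrow> (nat \<Rightarrow> 'a::{finite,field}) \<Rightarrow> 'a) \<Rightarrow> 'a \<Rightarrow> 'a \<Rightarrow> nat \<Rightarrow> (nat \<Rightarrow> 'a) \<Rightarrow> 'a" where
  "difference_strategy n f a b k z =
     (f k (restrict (z(n := a)) ({..<Suc n} - {k})) - f k (restrict (z(n := b)) ({..<Suc n} - {k}))) / (a - b)"

lemma nof_wins_difference_strategy: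
  fixes f :: "nat \<Rightarrow> (nat \<Rightarrow> 'a::{finite,field}) \<Rightarrow> 'a"
  assumes "a \<noteq> b" and "nof_wins (Suc n) f (y(n := a))" and "nof_wins (Suc n) f (y(n := b))"
  shows "nof_wins n (difference_strategy n f a b) y"
proof -
  define F where "F c k = f k (restrict (y(n := c)) ({..<Suc n} - {k}))" for c k
  have view_n: "restrict (y(n := c)) ({..<Suc n} - {n}) = restrict y {..<n}" for c
    by (rule ext) (auto simp: restrict_def)
  have view_k: "restrict ((restrict y ({..<n} - {k}))(n := c)) ({..<Suc n} - {k})
                = restrict (y(n := c)) ({..<Suc n} - {k})" if "k < n" for c k
    using that by (intro ext) (auto simp: restrict_def)
  have win: "(\<Prod>k<n. y k) * c = (\<Sum>k<n. F c k) + f n (restrict y {..<n})"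
    if "nof_wins (Suc n) f (y(n := c))" for c
    using that by (simp add: nof_wins_def prod.lessThan_Suc sum.lessThan_Suc view_n F_def)
  have "(\<Prod>k<n. y k) * (a - b) = (\<Sum>k<n. F a k - F b k)"
    using win[OF assms(2)] win[OF assms(3)] by (simp add: sum_subtractf right_diff_distrib)
  then have "(\<Prod>k<n. y k) = (\<Sum>k<n. (F a k - F b k) / (a - b))"
    using assms(1) by (simp add: sum_divide_distrib[symmetric] eq_divide_eq)
  also have "\<dots> = (\<Sum>k<n. difference_strategy n f a b k (restrict y ({..<n} - {k})))"
    by (intro sum.cong refl) (simp only: difference_strategy_def view_k F_def lessThan_iff)
  finally show ?thesis
    unfolding nof_wins_def .
qed

lemma card_common_wins_le:
  fixes f :: "nat \<Rightarrow> (nat \<Rightarrow> 'a::{finite,field}) \<Rightarrow> 'a"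
  assumes "a \<noteq> b"
  shows "real (card {y \<in> PiE {..<n} (\<lambda>_. UNIV). nof_wins (Suc n) f (y(n := a)) \<and> nof_wins (Suc n) f (y(n := b))})
         \<le> real CARD('a) ^ n * nof_omega TYPE('a) n"
proof -
  let ?X = "PiE {..<n} (\<lambda>_. UNIV :: 'a set)"
  let ?g = "difference_strategy n f a b"
  have "card {y \<in> ?X. nof_wins (Suc n) f (y(n := a)) \<and> nof_wins (Suc n) f (y(n := b))}
        \<le> card {y \<in> ?X. nof_wins n ?g y}"
    using nof_wins_difference_strategy[OF assms] by (intro card_mono) (auto simp: finite_PiE)
  then have "real (card {y \<in> ?X. nof_wins (Suc n) f (y(n := a)) \<and> nof_wins (Suc n) f (y(n := b))})
        \<le> real (card {y \<in> ?X. nof_wins n ?g y})"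
    by (rule of_nat_mono)
  also have "\<dots> = real CARD('a) ^ n * nof_win_prob n ?g"
    by (simp add: nof_win_prob_eq_card)
  also have "\<dots> \<le> real CARD('a) ^ n * nof_omega TYPE('a) n"
    by (rule mult_left_mono[OF nof_win_prob_le_omega]) simp
  finally show ?thesis .
qed

lemma nof_win_prob_Suc_le:
  fixes f :: "nat \<Rightarrow> (nat \<Rightarrow> 'a::{finite,field}) \<Rightarrow> 'a"
  defines "q \<equiv> real CARD('a)"
  shows "nof_win_prob (Suc n) f \<le> (1 + sqrt (1 + 4 * q * (q - 1) * nof_omega TYPE('a) n)) / (2 * q)"
proof -
  define \<omega> where "\<omega> = nof_omega TYPE('a) n"
  define p where "p = nof_win_prob (Suc n) f"
  define N where "N = q ^ n"
  define R where "R y a \<longleftrightarrow> nof_wins (Suc n) f (y(n := a))" for y a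
  define T where "T = (\<Sum>y\<in>PiE {..<n} (\<lambda>_. UNIV). real (card {a \<in> UNIV. R y a}))"
  have "q > 0" by (simp add: q_def)
  have T: "T = N * (q * p)"
    using card_PiE_lessThan_Suc[where P = "nof_wins (Suc n) f"]
    by (simp add: T_def R_def p_def q_def N_def nof_win_prob_eq_card)
  have "T\<^sup>2 \<le> N * (T + q * (q - 1) * (N * \<omega>))"
    using incidences_squared_le[where Y = "PiE {..<n} (\<lambda>_. UNIV)" and A = UNIV and M = "N * \<omega>" and R = R]
    by (simp add: T_def R_def q_def N_def \<omega>_def card_PiE finite_PiE card_common_wins_le)
  then have "N\<^sup>2 * (q\<^sup>2 * p\<^sup>2) \<le> N\<^sup>2 * (q * p + q * (q - 1) * \<omega>)"
    unfolding T by (simp add: power2_eq_square algebra_simps)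
  then have "q\<^sup>2 * p\<^sup>2 \<le> q * p + q * (q - 1) * \<omega>"
    using \<open>q > 0\<close> by (simp add: N_def)
  then show ?thesis
    using le_quadratic_root[OF \<open>q > 0\<close>] by (simp add: p_def \<omega>_def mult.assoc)
qed

theorem propositionB2:
  fixes m :: nat
  assumes "m \<ge> 2"
  shows "nof_omega TYPE('a::{finite,field}) m
         \<le> (1 + sqrt (1 + 4 * real (card (UNIV::'a set)) * (real (card (UNIV::'a set)) - 1)
                          * nof_omega TYPE('a) (m - 1)))
            / (2 * real (card (UNIV::'a set)))"
proof -
  obtain n where m: "m = Suc n" using assms by (cases m) auto
  obtain f :: "nat \<Rightarrow> (nat \<Rightarrow> 'a) \<Rightarrow> 'a" where "nof_omega TYPE('a) m = nof_win_prob m f"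
    by (rule nof_omega_attained)
  with nof_win_prob_Suc_le[of n f] show ?thesis unfolding m by simp
qed

end
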